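(* Let $\Phi:[0,\infty)\to[0,\infty)$ be nondecreasing with $\Phi(0)=0$, and let $\Psi:[0,\infty)\to[0,\infty)$ be nondecreasing and convex with $\Psi(0)=0$. Let $x=(x_n)$, $y=(y_n)$ be real sequences tending to $0$ such that $x\gtrless y$ and $\sum_{j=1}^\infty\Phi(|y_j|)\le\sum_{j=1}^\infty\Phi(|x_j|)<\infty$. Then \[ \sum_{j=1}^\infty\Psi(\Phi(|x_j|))\ge\sum_{j=1}^\infty\Psi(\Phi(|y_j|)) \] (with values in $[0,\infty]$).
   Context: For a real sequence $x\to0$, $x^*=(x_n^* )$ is the nonincreasing permutation of $(|x_n|)$. $x\gtrless y$ means there is $n_0\in\mathbb N$ with $x_n^*\ge y_n^*$ for $n\le n_0$ and $x_n^*\le y_n^*$ for $n>n_0$. *)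

theory Defs
  imports "HOL-Analysis.Analysis"
begin

text \<open>Nonincreasing rearrangement (0-indexed): the value at position n is the
(n+1)-th largest of the numbers |x k|, counted with multiplicity, i.e.
inf of all t \<ge> 0 such that fewer than n+1 indices k satisfy |x k| > t.\<close>
definition decr_rearr :: "(nat \<Rightarrow> real) \<Rightarrow> nat \<Rightarrow> real" where
  "decr_rearr x n = Inf {t. t \<ge> 0 \<and> finite {k. \<bar>x k\<bar> > t} \<and> card {k. \<bar>x k\<bar> > t} \<le> n}"

text \<open>x \<gtrless> y : there is n0 with x*_n \<ge> y*_n for the first n0 positions and
x*_n \<le> y*_n afterwards (paper indexing from 1, n0 \<in> {1,2,...}; here 0-indexed).\<close>
definition gtrless :: "(nat \<Rightarrow> real) \<Rightarrow> (nat \<Rightarrow> real) \<Rightarrow> bool" where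
  "gtrless x y \<longleftrightarrow> (\<exists>n0. (\<forall>n\<le>n0. decr_rearr x n \<ge> decr_rearr y n) \<and>
                         (\<forall>n>n0. decr_rearr x n \<le> decr_rearr y n))"

end

theory Submission
  imports Defs
begin

text \<open>Let \<open>a n\<close> and \<open>b n\<close> be \<open>\<Phi>\<close> applied to the nonincreasing rearrangements of \<open>x\<close> and \<open>y\<close>.
Sums of \<open>g |x j|\<close> with \<open>g 0 = 0\<close> do not change under the rearrangement, since all level
sets \<open>{j. t < |x j|}\<close>, \<open>t > 0\<close>, keep their (finite) cardinalities. The crossing condition
says \<open>b n \<le> a n\<close> up to \<open>n0\<close> and \<open>a n \<le> b n\<close> afterwards, while \<open>b\<close> is nonincreasing.
If \<open>c \<ge> 0\<close> is a supporting slope of \<open>\<Psi>\<close> at \<open>b n0\<close>, convexity gives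
\<open>\<Psi> (b n) + c * a n \<le> \<Psi> (a n) + c * b n\<close> for every \<open>n\<close>; summing and cancelling
\<open>c * \<Sum> b \<le> c * \<Sum> a < \<infinity>\<close> yields the claim.\<close>

lemma card_level_sets_eq_imp_sum_eq:
  fixes u :: "'i \<Rightarrow> 'b::{linorder,no_bot}" and v :: "'j \<Rightarrow> 'b"
    and f :: "'b \<Rightarrow> 'c::comm_monoid_add"
  assumes "finite A" "finite B"
    and "\<And>s. card {i\<in>A. s < u i} = card {j\<in>B. s < v j}"
  shows "(\<Sum>i\<in>A. f (u i)) = (\<Sum>j\<in>B. f (v j))"
  using assms
proof (induction A arbitrary: B rule: finite_remove_induct)
  case empty
  have "B = {}"
  proof (rule ccontr)
    assume "B \<noteq> {}"
    obtain s where "s < Min (v ` B)" using lt_ex by blast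
    then have "{j\<in>B. s < v j} = B" using \<open>finite B\<close> \<open>B \<noteq> {}\<close> by auto
    then show False using empty.prems(2)[of s] \<open>B \<noteq> {}\<close> \<open>finite B\<close> by simp
  qed
  then show ?case by simp
next
  case (remove A)
  \<comment> \<open>Drop a maximiser on each side: the two maxima agree, because \<open>s\<close> lies below either
    one iff the level set at \<open>s\<close> is nonempty.\<close>
  have level_nonempty: "card {k\<in>K. s < w k} \<noteq> 0 \<longleftrightarrow> (\<exists>k\<in>K. s < w k)"
    if "finite K" for s and K :: "'k set" and w :: "'k \<Rightarrow> 'b"
    using that by (auto simp: card_eq_0_iff)
  have "Max (u ` A) \<in> u ` A" using remove.hyps by (intro Max_in) auto
  then obtain i0 where i0: "i0 \<in> A" "u i0 = Max (u ` A)" by (metis imageE)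
  have "B \<noteq> {}"
  proof -
    obtain s where "s < u i0" using lt_ex by blast
    then have "card {i\<in>A. s < u i} \<noteq> 0"
      using i0(1) level_nonempty[of A s u] remove.hyps(1) by blast
    then show ?thesis using remove.prems(2)[of s] by auto
  qed
  then have "Max (v ` B) \<in> v ` B" using remove.prems(1) by (intro Max_in) auto
  then obtain j0 where j0: "j0 \<in> B" "v j0 = Max (v ` B)" by (metis imageE)
  have below_max: "s < u i0 \<longleftrightarrow> s < v j0" for s
    using remove.prems(2)[of s] level_nonempty[of A s u] level_nonempty[of B s v]
      remove.hyps remove.prems(1) \<open>B \<noteq> {}\<close> by (simp add: i0 j0 Max_gr_iff)
  then have max_eq: "u i0 = v j0"
    by (metis linorder_neqE order.irrefl)
  have "(\<Sum>i\<in>A - {i0}. f (u i)) = (\<Sum>j\<in>B - {j0}. f (v j))"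
  proof (rule remove.IH[OF i0(1)])
    fix s
    have "{i\<in>A - {i0}. s < u i} = {i\<in>A. s < u i} - {i0}"
      "{j\<in>B - {j0}. s < v j} = {j\<in>B. s < v j} - {j0}" by auto
    then show "card {i\<in>A - {i0}. s < u i} = card {j\<in>B - {j0}. s < v j}"
      using remove.prems(2)[of s] below_max[of s] i0(1) j0(1) remove.hyps remove.prems(1)
      by (simp add: card_Diff_singleton_if)
  qed (use remove in auto)
  then show ?case
    using remove.hyps remove.prems(1) i0 j0 max_eq by (simp add: sum.remove)
qed

lemma finite_abs_gt_if_LIMSEQ_zero:
  fixes x :: "nat \<Rightarrow> real"
  assumes "x \<longlonglongrightarrow> 0" "0 < t"
  shows "finite {k. t < \<bar>x k\<bar>}"
proof -
  have "\<forall>\<^sub>F k in sequentially. \<not> t < \<bar>x k\<bar>"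
    using tendstoD[OF assms] by (auto elim: eventually_mono)
  then show ?thesis by (simp add: cofinite_eq_sequentially[symmetric] eventually_cofinite)
qed

lemma decr_rearr_set_nonempty:
  fixes x :: "nat \<Rightarrow> real"
  assumes "x \<longlonglongrightarrow> 0"
  shows "{t. 0 \<le> t \<and> finite {k. t < \<bar>x k\<bar>} \<and> card {k. t < \<bar>x k\<bar>} \<le> n} \<noteq> {}"
proof -
  obtain B where "0 < B" "\<And>k. norm (x k) \<le> B"
    using convergent_imp_Bseq[OF convergentI[OF assms]] by (auto elim: BseqE)
  then have "{k. B < \<bar>x k\<bar>} = {}" by (force simp: not_less[symmetric])
  then show ?thesis using \<open>0 < B\<close> by (intro ex_in_conv[THEN iffD1] exI[of _ B]) auto
qed

lemma decr_rearr_set_bdd_below: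
  "bdd_below {t::real. 0 \<le> t \<and> finite {k. t < \<bar>x k\<bar>} \<and> card {k. t < \<bar>x k\<bar>} \<le> n}"
  by (rule bdd_belowI[of _ 0]) auto

lemma decr_rearr_nonneg:
  assumes "x \<longlonglongrightarrow> 0"
  shows "0 \<le> decr_rearr x n"
  unfolding decr_rearr_def using decr_rearr_set_nonempty[OF assms] by (intro cInf_greatest) auto

lemma decr_rearr_antimono:
  assumes "x \<longlonglongrightarrow> 0" "n \<le> m"
  shows "decr_rearr x m \<le> decr_rearr x n"
  unfolding decr_rearr_def using decr_rearr_set_nonempty[OF assms(1)] assms(2)
  by (intro cInf_superset_mono decr_rearr_set_bdd_below) auto

lemma decr_rearr_le_iff:
  assumes "x \<longlonglongrightarrow> 0" "0 < t"
  shows "decr_rearr x n \<le> t \<longleftrightarrow> card {k. t < \<bar>x k\<bar>} \<le> n"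
proof
  assume "card {k. t < \<bar>x k\<bar>} \<le> n"
  then show "decr_rearr x n \<le> t"
    unfolding decr_rearr_def using finite_abs_gt_if_LIMSEQ_zero[OF assms] assms(2)
    by (intro cInf_lower decr_rearr_set_bdd_below) auto
next
  assume le: "decr_rearr x n \<le> t"
  show "card {k. t < \<bar>x k\<bar>} \<le> n"
  proof (rule ccontr)
    define D where "D = {k. t < \<bar>x k\<bar>}"
    assume "\<not> card {k. t < \<bar>x k\<bar>} \<le> n"
    then have card_D: "n < card D" by (simp add: D_def)
    have "finite D" unfolding D_def using finite_abs_gt_if_LIMSEQ_zero[OF assms] .
    moreover have "D \<noteq> {}" using card_D by auto
    ultimately have "Min ((\<lambda>k. \<bar>x k\<bar>) ` D) \<in> (\<lambda>k. \<bar>x k\<bar>) ` D" by (intro Min_in) auto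
    then have "t < Min ((\<lambda>k. \<bar>x k\<bar>) ` D)" by (auto simp: D_def)
    also have "Min ((\<lambda>k. \<bar>x k\<bar>) ` D) \<le> decr_rearr x n"
      unfolding decr_rearr_def
    proof (intro cInf_greatest[OF decr_rearr_set_nonempty[OF assms(1)]])
      fix s assume s: "s \<in> {t. 0 \<le> t \<and> finite {k. t < \<bar>x k\<bar>} \<and> card {k. t < \<bar>x k\<bar>} \<le> n}"
      show "Min ((\<lambda>k. \<bar>x k\<bar>) ` D) \<le> s"
      proof (rule ccontr)
        assume "\<not> ?thesis"
        moreover have "Min ((\<lambda>k. \<bar>x k\<bar>) ` D) \<le> \<bar>x k\<bar>" if "k \<in> D" for k
          using \<open>finite D\<close> that by simp
        ultimately have "D \<subseteq> {k. s < \<bar>x k\<bar>}" by fastforce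
        then have "card D \<le> card {k. s < \<bar>x k\<bar>}" using s by (intro card_mono) auto
        then show False using s card_D by auto
      qed
    qed
    finally show False using le by simp
  qed
qed

lemma decr_rearr_level_set:
  assumes "x \<longlonglongrightarrow> 0" "0 < t"
  shows "{n. t < decr_rearr x n} = {..< card {k. t < \<bar>x k\<bar>}}"
proof -
  have "t < decr_rearr x n \<longleftrightarrow> n < card {k. t < \<bar>x k\<bar>}" for n
    using decr_rearr_le_iff[OF assms, of n] by linarith
  then show ?thesis by auto
qed

lemma suminf_ennreal_le_if_card_level_sets_eq:
  fixes u v :: "nat \<Rightarrow> real" and g :: "real \<Rightarrow> real"
  assumes u_nonneg: "\<And>j. 0 \<le> u j"
    and finite_u: "\<And>t. 0 < t \<Longrightarrow> finite {j. t < u j}"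
    and finite_v: "\<And>t. 0 < t \<Longrightarrow> finite {j. t < v j}"
    and card_eq: "\<And>t. 0 < t \<Longrightarrow> card {j. t < u j} = card {j. t < v j}"
    and "g 0 = 0"
  shows "(\<Sum>j. ennreal (g (u j))) \<le> (\<Sum>j. ennreal (g (v j)))"
proof (rule suminf_le_const[OF summableI])
  fix n
  define P where "P = {i. i < n \<and> 0 < u i}"
  define t where "t = Min (insert 1 (u ` P)) / 2"
  have "finite P" by (simp add: P_def)
  then have "0 < Min (insert 1 (u ` P))" by (simp add: P_def)
  then have "0 < t" by (simp add: t_def)
  have P_above_t: "t < u i" if "i \<in> P" for i
  proof -
    have "Min (insert 1 (u ` P)) \<le> u i" using \<open>finite P\<close> that by (intro Min_le) auto
    then show ?thesis using \<open>0 < Min (insert 1 (u ` P))\<close> by (simp add: t_def)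
  qed
  have "(\<Sum>i<n. ennreal (g (u i))) = (\<Sum>i\<in>{..<n} \<inter> {j. t < u j}. ennreal (g (u i)))"
  proof (rule sum.mono_neutral_right)
    show "\<forall>i\<in>{..<n} - {..<n} \<inter> {j. t < u j}. ennreal (g (u i)) = 0"
    proof
      fix i assume i: "i \<in> {..<n} - {..<n} \<inter> {j. t < u j}"
      then have "i \<notin> P" using P_above_t by auto
      then have "u i = 0" using i u_nonneg[of i] by (auto simp: P_def)
      then show "ennreal (g (u i)) = 0" using \<open>g 0 = 0\<close> by simp
    qed
  qed auto
  also have "\<dots> \<le> (\<Sum>i\<in>{j. t < u j}. ennreal (g (u i)))"
    using finite_u[OF \<open>0 < t\<close>] by (intro sum_mono2) auto
  also have "\<dots> = (\<Sum>j\<in>{j. t < v j}. ennreal (g (v j)))"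
  proof (rule card_level_sets_eq_imp_sum_eq[where f="\<lambda>r. ennreal (g r)"])
    fix s
    show "card {i \<in> {j. t < u j}. s < u i} = card {i \<in> {j. t < v j}. s < v i}"
    proof (cases "s \<le> t")
      case True
      then have "{i \<in> {j. t < u j}. s < u i} = {j. t < u j}"
        "{i \<in> {j. t < v j}. s < v i} = {j. t < v j}" by auto
      then show ?thesis using card_eq[OF \<open>0 < t\<close>] by simp
    next
      case False
      then have "{i \<in> {j. t < u j}. s < u i} = {j. s < u j}"
        "{i \<in> {j. t < v j}. s < v i} = {j. s < v j}" by auto
      then show ?thesis using card_eq[of s] \<open>0 < t\<close> False by simp
    qed
  qed (use finite_u finite_v \<open>0 < t\<close> in auto)
  also have "\<dots> \<le> (\<Sum>j. ennreal (g (v j)))"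
    using finite_v[OF \<open>0 < t\<close>] by (intro sum_le_suminf[OF summableI]) auto
  finally show "(\<Sum>i<n. ennreal (g (u i))) \<le> (\<Sum>j. ennreal (g (v j)))" .
qed

lemma suminf_ennreal_decr_rearr:
  fixes x :: "nat \<Rightarrow> real" and g :: "real \<Rightarrow> real"
  assumes "x \<longlonglongrightarrow> 0" "g 0 = 0"
  shows "(\<Sum>j. ennreal (g \<bar>x j\<bar>)) = (\<Sum>j. ennreal (g (decr_rearr x j)))"
proof -
  have finite_levels: "finite {j. t < \<bar>x j\<bar>}" "finite {j. t < decr_rearr x j}"
    and card_levels: "card {j. t < \<bar>x j\<bar>} = card {j. t < decr_rearr x j}"
    if "0 < t" for t
    using finite_abs_gt_if_LIMSEQ_zero[OF assms(1) that] decr_rearr_level_set[OF assms(1) that]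
    by auto
  show ?thesis
    using finite_levels card_levels decr_rearr_nonneg[OF assms(1)] assms(2)
    by (intro antisym suminf_ennreal_le_if_card_level_sets_eq) auto
qed

lemma convex_on_slope_le_next_slope:
  fixes f :: "real \<Rightarrow> real"
  assumes "convex_on I f" "a \<in> I" "c \<in> I" "a < b" "b < c"
  shows "(f b - f a) / (b - a) \<le> (f c - f b) / (c - b)"
proof -
  have flip: "(f p - f q) / (p - q) = (f q - f p) / (q - p)" for p q
    by (metis minus_diff_eq minus_divide_divide)
  have "(f a - f b) / (a - b) \<le> (f b - f c) / (b - c)"
    using convex_on_slope_le[OF assms] by (rule order.trans)
  then show ?thesis by (simp only: flip[of a b] flip[of b c])
qed

lemma convex_on_slope_mono:
  fixes f :: "real \<Rightarrow> real"
  assumes f: "convex_on I f" and "a \<in> I" "d \<in> I" "a < b" "b \<le> c" "c < d"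
  shows "(f b - f a) / (b - a) \<le> (f d - f c) / (d - c)"
proof (cases "b = c")
  case True
  then show ?thesis using convex_on_slope_le_next_slope[OF f \<open>a \<in> I\<close> \<open>d \<in> I\<close> \<open>a < b\<close>] assms(6)
    by simp
next
  case False
  have "is_interval I" using is_interval_convex_1 convex_on_imp_convex[OF f] by blast
  then have "b \<in> I" "c \<in> I"
    using mem_is_interval_1_I[of I a d] assms by simp_all
  have "(f b - f a) / (b - a) \<le> (f c - f b) / (c - b)"
    using convex_on_slope_le_next_slope[OF f \<open>a \<in> I\<close> \<open>c \<in> I\<close>] assms(4,5) False by simp
  also have "\<dots> \<le> (f d - f c) / (d - c)"
    using convex_on_slope_le_next_slope[OF f \<open>b \<in> I\<close> \<open>d \<in> I\<close>] assms(5,6) False by simp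
  finally show ?thesis .
qed

lemma mono_convex_on_supporting_slope:
  fixes f :: "real \<Rightarrow> real"
  assumes mono: "mono_on {0..} f" and convex: "convex_on {0..} f" and "0 \<le> r"
  obtains c where "0 \<le> c"
    and "\<And>u v. r \<le> v \<Longrightarrow> v \<le> u \<Longrightarrow> c * (u - v) \<le> f u - f v"
    and "\<And>u v. 0 \<le> u \<Longrightarrow> u \<le> v \<Longrightarrow> v \<le> r \<Longrightarrow> f v - f u \<le> c * (v - u)"
proof -
  define slope where "slope p q = (f q - f p) / (q - p)" for p q
  have diff_eq: "f q - f p = slope p q * (q - p)" if "p < q" for p q
    using that by (simp add: slope_def)
  have slope_mono: "slope a b \<le> slope c d" if "0 \<le> a" "a < b" "b \<le> c" "c < d" for a b c d
    unfolding slope_def using convex_on_slope_mono[OF convex _ _ that(2-4)] that by simp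
  define c where "c = Inf (slope r ` {r<..})"
  have right_slopes_nonneg: "0 \<le> slope r w" if "r < w" for w
    using that \<open>0 \<le> r\<close> mono_onD[OF mono, of r w] by (simp add: slope_def)
  have c_le: "c \<le> slope r w" if "r < w" for w
  proof -
    have "bdd_below (slope r ` {r<..})"
      using right_slopes_nonneg by (intro bdd_belowI[of _ 0]) auto
    then show ?thesis unfolding c_def using that by (intro cInf_lower) auto
  qed
  show ?thesis
  proof
    show "0 \<le> c"
      unfolding c_def using right_slopes_nonneg by (intro cInf_greatest) auto
  next
    fix u v assume "r \<le> v" "v \<le> u"
    show "c * (u - v) \<le> f u - f v"
    proof (cases "v < u")
      case True
      have "c \<le> slope v u"
      proof (cases "r = v")
        case False
        then have "c \<le> slope r v" using \<open>r \<le> v\<close> c_le by simp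
        also have "\<dots> \<le> slope v u"
          using \<open>0 \<le> r\<close> \<open>r \<le> v\<close> False True by (intro slope_mono) auto
        finally show ?thesis .
      qed (use True c_le in simp)
      then show ?thesis using True diff_eq[of v u] by (simp add: mult_right_mono)
    qed (use \<open>v \<le> u\<close> in simp)
  next
    fix u v assume "0 \<le> u" "u \<le> v" "v \<le> r"
    show "f v - f u \<le> c * (v - u)"
    proof (cases "u < v")
      case True
      have "slope u v \<le> c"
        unfolding c_def
      proof (rule cInf_greatest)
        fix s assume "s \<in> slope r ` {r<..}"
        then obtain w where "r < w" "s = slope r w" by auto
        then show "slope u v \<le> s" using slope_mono[of u v r w] \<open>0 \<le> u\<close> True \<open>v \<le> r\<close> by simp
      qed auto
      then show ?thesis using True diff_eq[of u v] by (simp add: mult_right_mono)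
    qed (use \<open>u \<le> v\<close> in simp)
  qed
qed

lemma suminf_convex_le_if_crossing:
  fixes \<Psi> :: "real \<Rightarrow> real" and a b :: "nat \<Rightarrow> real"
  assumes \<Psi>_mono: "mono_on {0..} \<Psi>" and \<Psi>_convex: "convex_on {0..} \<Psi>"
    and \<Psi>_nonneg: "\<And>t. 0 \<le> t \<Longrightarrow> 0 \<le> \<Psi> t"
    and a_nonneg: "\<And>n. 0 \<le> a n" and b_nonneg: "\<And>n. 0 \<le> b n"
    and b_antimono: "\<And>n m. n \<le> m \<Longrightarrow> b m \<le> b n"
    and before: "\<And>n. n \<le> n0 \<Longrightarrow> b n \<le> a n" and after: "\<And>n. n0 < n \<Longrightarrow> a n \<le> b n"
    and sum_le: "(\<Sum>n. ennreal (b n)) \<le> (\<Sum>n. ennreal (a n))"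
    and sum_finite: "(\<Sum>n. ennreal (a n)) < \<infinity>"
  shows "(\<Sum>n. ennreal (\<Psi> (b n))) \<le> (\<Sum>n. ennreal (\<Psi> (a n)))"
proof -
  obtain c where "0 \<le> c"
    and above: "\<And>u v. b n0 \<le> v \<Longrightarrow> v \<le> u \<Longrightarrow> c * (u - v) \<le> \<Psi> u - \<Psi> v"
    and below: "\<And>u v. 0 \<le> u \<Longrightarrow> u \<le> v \<Longrightarrow> v \<le> b n0 \<Longrightarrow> \<Psi> v - \<Psi> u \<le> c * (v - u)"
    using mono_convex_on_supporting_slope[OF \<Psi>_mono \<Psi>_convex b_nonneg] by blast
  have "\<Psi> (b n) + c * a n \<le> \<Psi> (a n) + c * b n" for n
  proof (cases "n \<le> n0")
    case True
    then show ?thesis using above[of "b n" "a n"] before[of n] b_antimono[of n n0]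
      by (simp add: algebra_simps)
  next
    case False
    then show ?thesis using below[of "a n" "b n"] after[of n] a_nonneg[of n] b_antimono[of n0 n]
      by (simp add: algebra_simps)
  qed
  then have termwise: "ennreal (\<Psi> (b n)) + ennreal c * ennreal (a n)
      \<le> ennreal (\<Psi> (a n)) + ennreal c * ennreal (b n)" for n
    using \<Psi>_nonneg[OF a_nonneg] \<Psi>_nonneg[OF b_nonneg] a_nonneg[of n] b_nonneg[of n] \<open>0 \<le> c\<close>
    by (metis ennreal_leI ennreal_mult ennreal_plus mult_nonneg_nonneg)
  define A where "A = (\<Sum>n. ennreal (a n))"
  define B where "B = (\<Sum>n. ennreal (b n))"
  have "(\<Sum>n. ennreal (\<Psi> (b n))) + ennreal c * A
      = (\<Sum>n. ennreal (\<Psi> (b n)) + ennreal c * ennreal (a n))"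
    unfolding A_def by (simp only: ennreal_suminf_cmult[symmetric] suminf_add[OF summableI summableI])
  also have "\<dots> \<le> (\<Sum>n. ennreal (\<Psi> (a n)) + ennreal c * ennreal (b n))"
    by (intro suminf_le summableI termwise)
  also have "\<dots> = (\<Sum>n. ennreal (\<Psi> (a n))) + ennreal c * B"
    unfolding B_def by (simp only: ennreal_suminf_cmult[symmetric] suminf_add[OF summableI summableI])
  finally have sums: "(\<Sum>n. ennreal (\<Psi> (b n))) + ennreal c * A
      \<le> (\<Sum>n. ennreal (\<Psi> (a n))) + ennreal c * B" .
  have "ennreal c * B \<le> ennreal c * A"
    using sum_le unfolding A_def B_def by (intro mult_left_mono) auto
  then have "ennreal c * B + (\<Sum>n. ennreal (\<Psi> (b n)))
      \<le> ennreal c * A + (\<Sum>n. ennreal (\<Psi> (b n)))" by (rule add_right_mono)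
  also have "\<dots> \<le> ennreal c * B + (\<Sum>n. ennreal (\<Psi> (a n)))"
    using sums by (simp only: add.commute)
  finally have "ennreal c * B + (\<Sum>n. ennreal (\<Psi> (b n)))
      \<le> ennreal c * B + (\<Sum>n. ennreal (\<Psi> (a n)))" .
  moreover have "ennreal c * B \<noteq> \<infinity>"
    using sum_le sum_finite unfolding A_def B_def by (simp add: ennreal_mult_eq_top_iff top_unique)
  ultimately show ?thesis by (simp add: ennreal_add_left_cancel_le)
qed

theorem mainTheorem19:
  fixes \<Phi> \<Psi> :: "real \<Rightarrow> real" and x y :: "nat \<Rightarrow> real"
  assumes Phi_mono: "mono_on {0..} \<Phi>" and Phi_0: "\<Phi> 0 = 0"
    and Phi_nonneg: "\<And>t. t \<ge> 0 \<Longrightarrow> \<Phi> t \<ge> 0"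
    and Psi_mono: "mono_on {0..} \<Psi>" and Psi_convex: "convex_on {0..} \<Psi>" and Psi_0: "\<Psi> 0 = 0"
    and Psi_nonneg: "\<And>t. t \<ge> 0 \<Longrightarrow> \<Psi> t \<ge> 0"
    and x_lim: "x \<longlonglongrightarrow> 0" and y_lim: "y \<longlonglongrightarrow> 0"
    and xy: "gtrless x y"
    and sum_le: "(\<Sum>j. ennreal (\<Phi> \<bar>y j\<bar>)) \<le> (\<Sum>j. ennreal (\<Phi> \<bar>x j\<bar>))"
    and sum_fin: "(\<Sum>j. ennreal (\<Phi> \<bar>x j\<bar>)) < \<infinity>"
  shows "(\<Sum>j. ennreal (\<Psi> (\<Phi> \<bar>x j\<bar>))) \<ge> (\<Sum>j. ennreal (\<Psi> (\<Phi> \<bar>y j\<bar>)))"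
proof -
  obtain n0 where before: "\<And>n. n \<le> n0 \<Longrightarrow> decr_rearr y n \<le> decr_rearr x n"
    and after: "\<And>n. n0 < n \<Longrightarrow> decr_rearr x n \<le> decr_rearr y n"
    using xy unfolding gtrless_def by blast
  have Phi_le: "\<Phi> s \<le> \<Phi> t" if "0 \<le> s" "s \<le> t" for s t
    using mono_onD[OF Phi_mono] that by simp
  note x_nonneg = decr_rearr_nonneg[OF x_lim] and y_nonneg = decr_rearr_nonneg[OF y_lim]
  have "(\<Sum>n. ennreal (\<Psi> (\<Phi> (decr_rearr y n)))) \<le> (\<Sum>n. ennreal (\<Psi> (\<Phi> (decr_rearr x n))))"
  proof (rule suminf_convex_le_if_crossing[OF Psi_mono Psi_convex Psi_nonneg])
    show "(\<Sum>n. ennreal (\<Phi> (decr_rearr y n))) \<le> (\<Sum>n. ennreal (\<Phi> (decr_rearr x n)))"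
      and "(\<Sum>n. ennreal (\<Phi> (decr_rearr x n))) < \<infinity>"
      using sum_le sum_fin suminf_ennreal_decr_rearr[OF x_lim, of \<Phi>]
        suminf_ennreal_decr_rearr[OF y_lim, of \<Phi>] Phi_0 by simp_all
    show "\<Phi> (decr_rearr y m) \<le> \<Phi> (decr_rearr y n)" if "n \<le> m" for n m
      using Phi_le y_nonneg decr_rearr_antimono[OF y_lim that] by blast
    show "\<Phi> (decr_rearr y n) \<le> \<Phi> (decr_rearr x n)" if "n \<le> n0" for n
      using Phi_le y_nonneg before[OF that] by blast
    show "\<Phi> (decr_rearr x n) \<le> \<Phi> (decr_rearr y n)" if "n0 < n" for n
      using Phi_le x_nonneg after[OF that] by blast
  qed (use Phi_nonneg x_nonneg y_nonneg in auto)
  then show ?thesis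
    using suminf_ennreal_decr_rearr[OF x_lim, of "\<lambda>t. \<Psi> (\<Phi> t)"]
      suminf_ennreal_decr_rearr[OF y_lim, of "\<lambda>t. \<Psi> (\<Phi> t)"] Phi_0 Psi_0 by simp
qed

end
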